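(* Assume the Setting and consider Algorithm 2 with $0<\mu_0<4\sigma(1-\eta)$. (i) If $F(x_n)=y$ for some $n\ge0$, then $x_m=x_n$ for all $m>n$. (ii) If $\xi_{n+1}=\xi_n$ for some $n\ge0$, then $F(x_n)=y$, and $x_m=x_n$ and $\xi_m=\xi_n$ for all $m>n$.
   Context: Setting. Let $X,Y$ be real Hilbert spaces. Let $\mathcal R:X\to(-\infty,\infty]$ be proper, lower semicontinuous and strongly convex with constant $\sigma>0$, i.e. $\mathcal R(t\bar x+(1-t)x)+\sigma t(1-t)\|\bar x-x\|^2\le t\mathcal R(\bar x)+(1-t)\mathcal R(x)$ for all $\bar x,x\in\mathrm{dom}(\mathcal R)$ and $t\in[0,1]$. For $\xi\in\partial\mathcal R(x)$ (subdifferential) the Bregman distance is $D_{\mathcal R}^{\xi}(z,x)=\mathcal R(z)-\mathcal R(x)-\langle\xi,z-x\rangle$. The convex conjugate $\mathcal R^*$ is differentiable with $\|\nabla\mathcal R^*(\bar\xi)-\nabla\mathcal R^*(\xi)\|\le\|\bar\xi-\xi\|/(2\sigma)$, and $\nabla\mathcal R^*(\xi)=\arg\min_{x\in X}\{\mathcal R(x)-\langle\xi,x\rangle\}$ (unique minimizer), with $\xi\in\partial\mathcal R(\nabla\mathcal R^*(\xi))$. Let $F:\mathrm{dom}(F)\subset X\to Y$ and $y\in Y$. Assume: (b) there are $\rho>0$, $x_0\in X$, $\xi_0\in\partial\mathcal R(x_0)$ with $B_{2\rho}(x_0):=\{x:\|x-x_0\|\le 2\rho\}\subset\mathrm{dom}(F)$,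 and $F(x)=y$ has a solution $\bar x$ with $D_{\mathcal R}^{\xi_0}(\bar x,x_0)\le\sigma\rho^2$; (c) $F$ is weakly closed: if $x_n\in\mathrm{dom}(F)$, $x_n\rightharpoonup x$ and $F(x_n)\to v$, then $x\in\mathrm{dom}(F)$ and $F(x)=v$; (d) there are bounded linear operators $L(x):X\to Y$, $x\in B_{2\rho}(x_0)$, with $x\mapsto L(x)$ continuous on $B_{2\rho}(x_0)$, a constant $\eta\in[0,1)$ with $\|F(x)-F(\bar x)-L(\bar x)(x-\bar x)\|\le\eta\|F(x)-F(\bar x)\|$ for all $x,\bar x\in B_{2\rho}(x_0)$, and a constant $L>0$ with $\|L(x)\|\le L$ on $B_{2\rho}(x_0)$. Algorithm 2 (exact data $y$). Parameters: $\beta\in(0,\infty]$, $\mu_0>0$, $\mu_1>0$, and a fixed choice of step-size rule: (constant) $\alpha_n=\mu_0/L^2$, or (adaptive) $\alpha_n=\min\{\mu_0\|r_n\|^2/\|g_n\|^2,\mu_1\}$ if $r_n\ne0$ and $\alpha_n=0$ if $r_n=0$ (with $\mu_0\|r_n\|^2/\|g_n\|^2:=+\infty$ if $g_n=0$). Set $\xi_{-1}=\xi_0$, $x_0=\nabla\mathcal R^*(\xi_0)$. For all $n\ge0$ (no stopping): $r_n:=F(x_n)-y$, $g_n:=L(x_n)^*r_n$, $\alpha_n$ by the chosen rule; $m_n:=\xi_n-\xi_{n-1}$; $\tilde\gamma_0:=0$ and for $n\ge1$, $\tilde\gamma_n:=\langle m_n,x_n-x_{n-1}\rangle-(1-\eta)\alpha_{n-1}\|r_{n-1}\|^2+\beta_{n-1}\tilde\gamma_{n-1}$;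 $\beta_n:=\min\{\max\{0,(\alpha_n\langle g_n,m_n\rangle-2\sigma\tilde\gamma_n)/\|m_n\|^2\},\beta\}$ if $m_n\ne0$ and $\beta_n:=0$ if $m_n=0$; $\xi_{n+1}:=\xi_n-\alpha_ng_n+\beta_nm_n$, $x_{n+1}:=\nabla\mathcal R^*(\xi_{n+1})$. *)

theory Defs
  imports "HOL-Analysis.Analysis"
begin

definition proper_fun :: "('a \<Rightarrow> ereal) \<Rightarrow> bool" where
  "proper_fun R \<longleftrightarrow> (\<forall>x. R x \<noteq> -\<infinity>) \<and> (\<exists>x. R x \<noteq> \<infinity>)"

definition effdom :: "('a \<Rightarrow> ereal) \<Rightarrow> 'a set" where
  "effdom R = {x. R x < \<infinity>}"

definition lsc_fun :: "('a::topological_space \<Rightarrow> ereal) \<Rightarrow> bool" where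
  "lsc_fun R \<longleftrightarrow> (\<forall>c::ereal. closed {x. R x \<le> c})"

definition strongly_convex :: "('a::real_normed_vector \<Rightarrow> ereal) \<Rightarrow> real \<Rightarrow> bool" where
  "strongly_convex R \<sigma> \<longleftrightarrow>
     (\<forall>xb\<in>effdom R. \<forall>x\<in>effdom R. \<forall>t\<in>{0..1::real}.
        R (t *\<^sub>R xb + (1 - t) *\<^sub>R x) + ereal (\<sigma> * t * (1 - t) * (norm (xb - x))\<^sup>2)
          \<le> ereal t * R xb + ereal (1 - t) * R x)"

definition subdiff :: "('a::real_inner \<Rightarrow> ereal) \<Rightarrow> 'a \<Rightarrow> 'a set" where
  "subdiff R x = {\<xi>. R x \<noteq> \<infinity> \<and> R x \<noteq> -\<infinity> \<and>
                      (\<forall>z. R x + ereal (\<xi> \<bullet> (z - x)) \<le> R z)}"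

definition bregman :: "('a::real_inner \<Rightarrow> ereal) \<Rightarrow> 'a \<Rightarrow> 'a \<Rightarrow> 'a \<Rightarrow> ereal" where
  "bregman R \<xi> z x = R z - R x - ereal (\<xi> \<bullet> (z - x))"

definition grad_conj :: "('a::real_inner \<Rightarrow> ereal) \<Rightarrow> 'a \<Rightarrow> 'a" where
  "grad_conj R \<xi> = (THE x. \<forall>w. R x - ereal (\<xi> \<bullet> x) \<le> R w - ereal (\<xi> \<bullet> w))"

definition weak_conv :: "(nat \<Rightarrow> 'a::real_inner) \<Rightarrow> 'a \<Rightarrow> bool" where
  "weak_conv u x \<longleftrightarrow> (\<forall>z. (\<lambda>n. u n \<bullet> z) \<longlonglongrightarrow> x \<bullet> z)"

end

theory Submission
  imports Defs
begin

text \<open>Everything rests on a monotonicity of the Bregman distances \<open>D(z, x\<^sub>n) = D\<^sub>\<R>\<^sup>\<xi>\<^sup>\<^sub>n(z, x\<^sub>n)\<close>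
  to solutions \<open>z\<close> in \<open>B\<^sub>2\<^sub>\<rho>(x\<^sub>0)\<close>. By the three-point identity one step changes \<open>D(z, \<cdot>)\<close> by
  \<open>D(x\<^sub>n, x\<^sub>n\<^sub>+\<^sub>1) + \<langle>\<xi>\<^sub>n\<^sub>+\<^sub>1 - \<xi>\<^sub>n, x\<^sub>n - z\<rangle>\<close>. Strong convexity bounds the first term by
  \<open>\<parallel>\<xi>\<^sub>n\<^sub>+\<^sub>1 - \<xi>\<^sub>n\<parallel>\<^sup>2/(4\<sigma>)\<close>; the tangential cone condition and the invariant \<open>\<langle>m\<^sub>n, x\<^sub>n - z\<rangle> \<le> \<gamma>\<^sub>n\<close>
  bound the second, and the choice of \<open>\<beta>\<^sub>n\<close> makes the momentum contributions nonpositive, leaving a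
  decrease of at least \<open>(1 - \<eta> - \<mu>\<^sub>0/(4\<sigma>)) \<alpha>\<^sub>n \<parallel>r\<^sub>n\<parallel>\<^sup>2\<close>. For the given solution \<open>xbar\<close> this keeps every iterate in
  the ball. If \<open>x\<^sub>n\<close> is a solution, \<open>D(x\<^sub>n, x\<^sub>k)\<close> vanishes at \<open>k = n\<close> and cannot grow, so \<open>x\<^sub>k = x\<^sub>n\<close>;
  if \<open>\<xi>\<^sub>n\<^sub>+\<^sub>1 = \<xi>\<^sub>n\<close> the decrease is zero, forcing \<open>r\<^sub>n = 0\<close>, after which \<open>g\<close>, \<open>m\<close> and \<open>\<beta>\<close> vanish and
  the iteration is stationary.\<close>

section \<open>Strongly convex real functions\<close>

definition strongly_convex_on :: "'a::real_normed_vector set \<Rightarrow> ('a \<Rightarrow> real) \<Rightarrow> real \<Rightarrow> bool" where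
  "strongly_convex_on S f s \<longleftrightarrow>
     (\<forall>x\<in>S. \<forall>xb\<in>S. \<forall>t\<in>{0..1}. t *\<^sub>R xb + (1 - t) *\<^sub>R x \<in> S \<and>
        f (t *\<^sub>R xb + (1 - t) *\<^sub>R x) + s * t * (1 - t) * (norm (xb - x))\<^sup>2 \<le> t * f xb + (1 - t) * f x)"

lemma strongly_convex_onD:
  assumes "strongly_convex_on S f s" "x \<in> S" "xb \<in> S" "0 \<le> t" "t \<le> 1"
  shows "t *\<^sub>R xb + (1 - t) *\<^sub>R x \<in> S"
    and "f (t *\<^sub>R xb + (1 - t) *\<^sub>R x) + s * t * (1 - t) * (norm (xb - x))\<^sup>2 \<le> t * f xb + (1 - t) * f x"
  using assms unfolding strongly_convex_on_def by auto

lemma nonpos_if_le_small_multiples: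
  fixes c K :: real
  assumes "\<And>t. 0 < t \<Longrightarrow> t \<le> 1 \<Longrightarrow> c \<le> t * K"
  shows "c \<le> 0"
proof (rule LIMSEQ_le_const)
  show "(\<lambda>n. K / real (Suc n)) \<longlonglongrightarrow> 0"
    using LIMSEQ_Suc[OF lim_const_over_n[of K]] by simp
  have "c \<le> K / real (Suc n)" for n
    using assms[of "1 / real (Suc n)"] by simp
  then show "\<exists>N. \<forall>n\<ge>N. c \<le> K / real (Suc n)" by blast
qed

text \<open>A subgradient inequality improves to quadratic growth: compare f along the segment from x to w
  with its chord, and let the segment shrink.\<close>
lemma strongly_convex_on_subgradient_growth:
  fixes f :: "'a::real_inner \<Rightarrow> real"
  assumes sc: "strongly_convex_on S f s" and x: "x \<in> S" and w: "w \<in> S"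
    and subgrad: "\<And>v. v \<in> S \<Longrightarrow> f x + \<zeta> \<bullet> (v - x) \<le> f v"
  shows "f x + \<zeta> \<bullet> (w - x) + s * (norm (w - x))\<^sup>2 \<le> f w"
proof -
  define d where "d = (norm (w - x))\<^sup>2"
  have "\<zeta> \<bullet> (w - x) + s * d - (f w - f x) \<le> 0"
  proof (rule nonpos_if_le_small_multiples)
    fix t :: real assume t: "0 < t" "t \<le> 1"
    define p where "p = t *\<^sub>R w + (1 - t) *\<^sub>R x"
    have "p \<in> S" and chord: "f p + s * t * (1 - t) * d \<le> t * f w + (1 - t) * f x"
      using strongly_convex_onD[OF sc x w] t unfolding p_def d_def by auto
    moreover have "p - x = t *\<^sub>R (w - x)" by (simp add: p_def algebra_simps)
    ultimately have "f x + t * (\<zeta> \<bullet> (w - x)) \<le> f p" using subgrad[of p] by simp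
    then have "t * (\<zeta> \<bullet> (w - x) + s * d - (f w - f x)) \<le> t * (t * (s * d))"
      using chord by (simp add: algebra_simps)
    then show "\<zeta> \<bullet> (w - x) + s * d - (f w - f x) \<le> t * (s * d)" using t by simp
  qed
  then show ?thesis by (simp add: d_def)
qed

lemma strongly_convex_on_diff_linear:
  assumes "strongly_convex_on S f s" and "linear \<phi>"
  shows "strongly_convex_on S (\<lambda>w. f w - \<phi> w) s"
  unfolding strongly_convex_on_def
proof (intro ballI conjI)
  fix x xb t assume x: "x \<in> S" and xb: "xb \<in> S" and t: "t \<in> {0..(1::real)}"
  then show "t *\<^sub>R xb + (1 - t) *\<^sub>R x \<in> S"
    using strongly_convex_onD(1)[OF assms(1)] by auto
  have lin: "\<phi> (t *\<^sub>R xb + (1 - t) *\<^sub>R x) = t * \<phi> xb + (1 - t) * \<phi> x"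
    using \<open>linear \<phi>\<close> by (simp add: linear_add linear_scale)
  show "f (t *\<^sub>R xb + (1 - t) *\<^sub>R x) - \<phi> (t *\<^sub>R xb + (1 - t) *\<^sub>R x) + s * t * (1 - t) * (norm (xb - x))\<^sup>2
      \<le> t * (f xb - \<phi> xb) + (1 - t) * (f x - \<phi> x)"
    using strongly_convex_onD(2)[OF assms(1) x xb, of t] t unfolding lin by (simp add: algebra_simps)
qed

lemma strongly_convex_on_half_norm_square:
  "strongly_convex_on (UNIV :: 'a::real_inner set) (\<lambda>x. (norm x)\<^sup>2 / 2) (1 / 2)"
  unfolding strongly_convex_on_def
proof (intro ballI conjI)
  fix x xb :: 'a and t :: real
  show "t *\<^sub>R xb + (1 - t) *\<^sub>R x \<in> UNIV" by simp
  have "(norm (t *\<^sub>R xb + (1 - t) *\<^sub>R x))\<^sup>2 + t * (1 - t) * (norm (xb - x))\<^sup>2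
      = t * (norm xb)\<^sup>2 + (1 - t) * (norm x)\<^sup>2"
    by (simp add: power2_norm_eq_inner inner_add_left inner_add_right inner_diff_left
        inner_diff_right inner_commute[of x xb] algebra_simps)
  then show "(norm (t *\<^sub>R xb + (1 - t) *\<^sub>R x))\<^sup>2 / 2 + 1 / 2 * t * (1 - t) * (norm (xb - x))\<^sup>2
      \<le> t * ((norm xb)\<^sup>2 / 2) + (1 - t) * ((norm x)\<^sup>2 / 2)"
    by (simp add: field_simps)
qed

text \<open>Strong convexity at the midpoint of two almost minimal points bounds their distance.\<close>
lemma strongly_convex_on_minimising_Cauchy:
  assumes sc: "strongly_convex_on S f s" and s: "0 < s"
    and u: "\<And>k. u k \<in> S" and lower: "\<And>w. w \<in> S \<Longrightarrow> m \<le> f w"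
    and almost_min: "\<And>k. f (u k) \<le> m + \<epsilon> k" and "\<epsilon> \<longlonglongrightarrow> 0"
  shows "Cauchy u"
proof (rule CauchyI)
  have mid: "s / 4 * (norm (u i - u j))\<^sup>2 \<le> (\<epsilon> i + \<epsilon> j) / 2" for i j
  proof -
    let ?p = "(1 / 2) *\<^sub>R u i + (1 - 1 / 2) *\<^sub>R u j"
    have "m \<le> f ?p" using lower strongly_convex_onD(1)[OF sc u[of j] u[of i], of "1 / 2"] by simp
    then show ?thesis
      using strongly_convex_onD(2)[OF sc u[of j] u[of i], of "1 / 2"] almost_min[of i] almost_min[of j]
      by simp
  qed
  fix e :: real assume e: "0 < e"
  then have "0 < s / 4 * e\<^sup>2" using s by simp
  then obtain N where N: "\<And>k. N \<le> k \<Longrightarrow> \<epsilon> k < s / 4 * e\<^sup>2"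
    using order_tendstoD(2)[OF \<open>\<epsilon> \<longlonglongrightarrow> 0\<close>] unfolding eventually_sequentially by blast
  have "norm (u i - u j) < e" if "N \<le> i" "N \<le> j" for i j
  proof -
    have "s / 4 * (norm (u i - u j))\<^sup>2 < s / 4 * e\<^sup>2"
      using mid[of i j] N[OF that(1)] N[OF that(2)] by argo
    then have "(norm (u i - u j))\<^sup>2 < e\<^sup>2" using s by simp
    then show ?thesis using e by (simp add: power_less_imp_less_base)
  qed
  then show "\<exists>M. \<forall>m\<ge>M. \<forall>n\<ge>M. norm (u m - u n) < e" by blast
qed

lemma strongly_convex_on_attains_min:
  fixes f :: "'a::{real_inner,complete_space} \<Rightarrow> real"
  assumes sc: "strongly_convex_on S f s" and s: "0 < s" and "S \<noteq> {}"
    and bounded: "\<And>w. w \<in> S \<Longrightarrow> b \<le> f w"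
    and closed: "\<And>u w c. (\<And>k. u k \<in> S) \<Longrightarrow> u \<longlonglongrightarrow> w \<Longrightarrow>
                   (\<And>k. f (u k) \<le> c + 1 / real (Suc k)) \<Longrightarrow> w \<in> S \<and> f w \<le> c"
  shows "\<exists>x\<in>S. \<forall>w\<in>S. f x \<le> f w"
proof -
  define m where "m = Inf (f ` S)"
  have bdd: "bdd_below (f ` S)" using bounded by (rule bdd_belowI2)
  have lower: "\<And>w. w \<in> S \<Longrightarrow> m \<le> f w" unfolding m_def using bdd by (simp add: cInf_lower)
  have "\<forall>k. \<exists>v\<in>S. f v < m + 1 / real (Suc k)"
  proof
    fix k
    have "Inf (f ` S) < m + 1 / real (Suc k)" by (simp add: m_def)
    then show "\<exists>v\<in>S. f v < m + 1 / real (Suc k)" using cInf_less_iff[OF _ bdd] \<open>S \<noteq> {}\<close> by simp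
  qed
  then obtain u where u: "\<And>k. u k \<in> S" and almost_min: "\<And>k. f (u k) < m + 1 / real (Suc k)"
    by metis
  have "Cauchy u"
    using strongly_convex_on_minimising_Cauchy[OF sc s u lower _ LIMSEQ_Suc[OF lim_inverse_n']] almost_min
    by (simp add: less_imp_le)
  then obtain w where "u \<longlonglongrightarrow> w" using Cauchy_convergent convergent_def by blast
  then have "w \<in> S \<and> f w \<le> m"
    by (rule closed[OF u]) (use almost_min in \<open>simp add: less_imp_le\<close>)
  then show ?thesis using lower by (meson order_trans)
qed

section \<open>Riesz representation and adjoints\<close>

lemma half_norm_square_minus_functional_attains_min:
  fixes \<phi> :: "'a::{real_inner,complete_space} \<Rightarrow> real"
  assumes bl: "bounded_linear \<phi>"
  obtains z where "\<And>v. (norm z)\<^sup>2 / 2 - \<phi> z \<le> (norm v)\<^sup>2 / 2 - \<phi> v"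
proof -
  define f where "f = (\<lambda>x::'a. (norm x)\<^sup>2 / 2 - \<phi> x)"
  have sc: "strongly_convex_on UNIV f (1 / 2)"
    unfolding f_def using strongly_convex_on_half_norm_square bl
    by (rule strongly_convex_on_diff_linear[OF _ bounded_linear.linear])
  obtain K where K: "\<And>x. norm (\<phi> x) \<le> norm x * K" using bounded_linear.bounded[OF bl] by blast
  have bounded: "- K\<^sup>2 / 2 \<le> f w" for w
  proof -
    have "\<phi> w \<le> norm w * K" using K[of w] by simp
    moreover have "0 \<le> (norm w - K)\<^sup>2" by simp
    ultimately show ?thesis unfolding f_def by (simp add: power2_diff algebra_simps)
  qed
  have closed: "f w \<le> c" if "u \<longlonglongrightarrow> w" and "\<And>k. f (u k) \<le> c + 1 / real (Suc k)" for u w c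
  proof (rule LIMSEQ_le)
    show "(\<lambda>k. f (u k)) \<longlonglongrightarrow> f w"
      unfolding f_def by (intro tendsto_intros bounded_linear.tendsto[OF bl] that) auto
    show "(\<lambda>k. c + 1 / real (Suc k)) \<longlonglongrightarrow> c"
      using tendsto_add[OF tendsto_const LIMSEQ_Suc[OF lim_inverse_n'], of c] by simp
  qed (use that in auto)
  have "\<exists>x\<in>UNIV. \<forall>w\<in>UNIV. f x \<le> f w"
    by (rule strongly_convex_on_attains_min[OF sc _ _ bounded]) (use closed in auto)
  then show ?thesis using that unfolding f_def by blast
qed

text \<open>Riesz representation: perturbing the minimiser z of the strictly convex functional
  \<open>\<parallel>x\<parallel>\<^sup>2/2 - \<phi> x\<close> in direction v gives a first-order term \<open>t (z \<bullet> v - \<phi> v)\<close> which must vanish.\<close>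
lemma riesz_representation:
  fixes \<phi> :: "'a::{real_inner,complete_space} \<Rightarrow> real"
  assumes bl: "bounded_linear \<phi>"
  shows "\<exists>z. \<forall>v. \<phi> v = v \<bullet> z"
proof -
  obtain z where z: "\<And>v. (norm z)\<^sup>2 / 2 - \<phi> z \<le> (norm v)\<^sup>2 / 2 - \<phi> v"
    using half_norm_square_minus_functional_attains_min[OF bl] by blast
  have "\<phi> v = v \<bullet> z" for v
  proof -
    define a where "a = z \<bullet> v - \<phi> v"
    define c where "c = (norm v)\<^sup>2 / 2"
    have expansion: "0 \<le> t * a + t * t * c" for t
    proof -
      have "(norm (z + t *\<^sub>R v))\<^sup>2 = (norm z)\<^sup>2 + 2 * t * (z \<bullet> v) + t * t * (norm v)\<^sup>2"
        by (simp add: power2_norm_eq_inner inner_add_left inner_add_right inner_commute[of v z]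
            algebra_simps)
      moreover have "\<phi> (z + t *\<^sub>R v) = \<phi> z + t * \<phi> v"
        using bl by (simp add: bounded_linear.linear linear_add linear_scale)
      ultimately show ?thesis using z[of "z + t *\<^sub>R v"] by (simp add: a_def c_def algebra_simps)
    qed
    have "\<bar>a\<bar> \<le> t * c" if "0 < t" for t
    proof -
      have "t * \<bar>a\<bar> \<le> t * (t * c)"
        using expansion[of t] expansion[of "- t"] by (simp add: abs_if algebra_simps)
      then show ?thesis using that by (simp add: mult_le_cancel_left_pos)
    qed
    then have "\<bar>a\<bar> \<le> 0" by (rule nonpos_if_le_small_multiples) simp
    then show ?thesis by (simp add: a_def inner_commute)
  qed
  then show ?thesis by blast
qed

text \<open>The library's \<open>adjoint\<close> is a choice operator, characterised by \<open>adjoint_works\<close> only in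
  Euclidean space; Riesz representation makes the choice meaningful in every Hilbert space.\<close>
lemma adjoint_works_complete:
  fixes T :: "'a::{real_inner,complete_space} \<Rightarrow> 'b::real_inner"
  assumes "bounded_linear T"
  shows "T x \<bullet> y = x \<bullet> adjoint T y"
proof -
  have "\<forall>y. \<exists>z. \<forall>x. T x \<bullet> y = x \<bullet> z"
    using riesz_representation[OF bounded_linear_compose[OF bounded_linear_inner_left assms]] by simp
  then show ?thesis
    unfolding adjoint_def choice_iff
    by (intro someI2_ex[where Q="\<lambda>f'. T x \<bullet> y = x \<bullet> f' y"]) auto
qed

section \<open>The gradient of the conjugate of a strongly convex functional\<close>

locale strongly_convex_functional =
  fixes R :: "'a::{real_inner,complete_space} \<Rightarrow> ereal" and \<sigma> :: real
  assumes proper: "proper_fun R" and lsc: "lsc_fun R"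
    and \<sigma>_pos: "0 < \<sigma>" and strongly_convex: "strongly_convex R \<sigma>"
    and subdiff_nonempty: "\<exists>x0 \<xi>0. \<xi>0 \<in> subdiff R x0"
begin

definition Rr :: "'a \<Rightarrow> real" where "Rr z = real_of_ereal (R z)"

lemma R_eq_ereal: "z \<in> effdom R \<Longrightarrow> R z = ereal (Rr z)"
  using proper unfolding proper_fun_def effdom_def Rr_def by (cases "R z") auto

lemma R_eq_infinity: "z \<notin> effdom R \<Longrightarrow> R z = \<infinity>"
  unfolding effdom_def by (simp add: top.not_eq_extremum)

lemma strongly_convex_on_Rr: "strongly_convex_on (effdom R) Rr \<sigma>"
  unfolding strongly_convex_on_def
proof (intro ballI)
  fix x xb t assume x: "x \<in> effdom R" and xb: "xb \<in> effdom R" and t: "t \<in> {0..(1::real)}"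
  define p where "p = t *\<^sub>R xb + (1 - t) *\<^sub>R x"
  have "R p + ereal (\<sigma> * t * (1 - t) * (norm (xb - x))\<^sup>2) \<le> ereal t * R xb + ereal (1 - t) * R x"
    using strongly_convex x xb t unfolding strongly_convex_def p_def by blast
  also have "\<dots> = ereal (t * Rr xb + (1 - t) * Rr x)"
    by (simp add: R_eq_ereal[OF x] R_eq_ereal[OF xb])
  finally have chord: "R p + ereal (\<sigma> * t * (1 - t) * (norm (xb - x))\<^sup>2) \<le> ereal (t * Rr xb + (1 - t) * Rr x)" .
  then have "p \<in> effdom R" unfolding effdom_def by auto
  with chord show "p \<in> effdom R \<and> Rr p + \<sigma> * t * (1 - t) * (norm (xb - x))\<^sup>2 \<le> t * Rr xb + (1 - t) * Rr x"
    by (simp add: R_eq_ereal)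
qed

lemma conj_objective_bounded_below: "\<exists>b. \<forall>w\<in>effdom R. b \<le> Rr w - \<zeta> \<bullet> w"
proof -
  obtain x0 \<xi>0 where sub: "\<xi>0 \<in> subdiff R x0" using subdiff_nonempty by blast
  then have x0: "x0 \<in> effdom R" unfolding subdiff_def effdom_def by (simp add: top.not_eq_extremum)
  have "Rr x0 + \<xi>0 \<bullet> (w - x0) \<le> Rr w" if "w \<in> effdom R" for w
  proof -
    have "R x0 + ereal (\<xi>0 \<bullet> (w - x0)) \<le> R w" using sub unfolding subdiff_def by blast
    then show ?thesis by (simp add: R_eq_ereal x0 that)
  qed
  then have growth: "Rr x0 + \<xi>0 \<bullet> (w - x0) + \<sigma> * (norm (w - x0))\<^sup>2 \<le> Rr w" if "w \<in> effdom R" for w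
    using strongly_convex_on_subgradient_growth[OF strongly_convex_on_Rr x0 that] by blast
  define M where "M = norm (\<xi>0 - \<zeta>)"
  have "Rr x0 - \<zeta> \<bullet> x0 - M\<^sup>2 / (4 * \<sigma>) \<le> Rr w - \<zeta> \<bullet> w" if w: "w \<in> effdom R" for w
  proof -
    define d where "d = norm (w - x0)"
    have "(\<zeta> - \<xi>0) \<bullet> (w - x0) \<le> M * d"
      using norm_cauchy_schwarz[of "\<zeta> - \<xi>0" "w - x0"] by (simp add: M_def d_def norm_minus_commute)
    moreover have "0 \<le> \<sigma> * (d - M / (2 * \<sigma>))\<^sup>2" using \<sigma>_pos by simp
    moreover have "\<sigma> * (d - M / (2 * \<sigma>))\<^sup>2 = \<sigma> * d\<^sup>2 - M * d + M\<^sup>2 / (4 * \<sigma>)"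
      using \<sigma>_pos by (simp add: power2_diff field_simps power2_eq_square)
    ultimately show ?thesis
      using growth[OF w] unfolding d_def by (simp add: inner_diff_left inner_diff_right)
  qed
  then show ?thesis by blast
qed

lemma conj_objective_closed:
  assumes u: "\<And>k. u k \<in> effdom R" and "u \<longlonglongrightarrow> w"
    and almost: "\<And>k. Rr (u k) - \<zeta> \<bullet> u k \<le> c + 1 / real (Suc k)"
  shows "w \<in> effdom R \<and> Rr w - \<zeta> \<bullet> w \<le> c"
proof -
  have sublevel: "R w \<le> ereal (c + \<zeta> \<bullet> w + e)" if "0 < e" for e
  proof -
    have lim: "(\<lambda>k. c + 1 / real (Suc k) + \<zeta> \<bullet> u k) \<longlonglongrightarrow> c + 0 + \<zeta> \<bullet> w"
      by (intro tendsto_intros LIMSEQ_Suc[OF lim_inverse_n'] \<open>u \<longlonglongrightarrow> w\<close>)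
    have "eventually (\<lambda>k. c + 1 / real (Suc k) + \<zeta> \<bullet> u k < c + \<zeta> \<bullet> w + e) sequentially"
      using order_tendstoD(2)[OF lim, of "c + \<zeta> \<bullet> w + e"] \<open>0 < e\<close> by simp
    then have ev: "eventually (\<lambda>k. u k \<in> {z. R z \<le> ereal (c + \<zeta> \<bullet> w + e)}) sequentially"
    proof (rule eventually_mono)
      fix k assume "c + 1 / real (Suc k) + \<zeta> \<bullet> u k < c + \<zeta> \<bullet> w + e"
      then have "Rr (u k) \<le> c + \<zeta> \<bullet> w + e" using almost[of k] by simp
      then show "u k \<in> {z. R z \<le> ereal (c + \<zeta> \<bullet> w + e)}" by (simp add: R_eq_ereal[OF u])
    qed
    have "closed {z. R z \<le> ereal (c + \<zeta> \<bullet> w + e)}" using lsc unfolding lsc_fun_def by blast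
    from Lim_in_closed_set[OF this ev _ \<open>u \<longlonglongrightarrow> w\<close>] show ?thesis by simp
  qed
  have w: "w \<in> effdom R" using sublevel[of 1] unfolding effdom_def by auto
  have "Rr w \<le> c + \<zeta> \<bullet> w + e" if "0 < e" for e
    using sublevel[OF that] by (simp add: R_eq_ereal[OF w])
  then have "Rr w \<le> c + \<zeta> \<bullet> w" by (rule field_le_epsilon)
  with w show ?thesis by simp
qed

lemma grad_conj_eqI:
  assumes xs: "xs \<in> effdom R" and min: "\<And>w. w \<in> effdom R \<Longrightarrow> Rr xs - \<zeta> \<bullet> xs \<le> Rr w - \<zeta> \<bullet> w"
  shows "grad_conj R \<zeta> = xs"
  unfolding grad_conj_def
proof (rule the_equality)
  show "\<forall>w. R xs - ereal (\<zeta> \<bullet> xs) \<le> R w - ereal (\<zeta> \<bullet> w)"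
  proof
    fix w show "R xs - ereal (\<zeta> \<bullet> xs) \<le> R w - ereal (\<zeta> \<bullet> w)"
      using min[of w] R_eq_infinity[of w] by (cases "w \<in> effdom R") (simp_all add: R_eq_ereal xs)
  qed
  have "Rr xs + \<zeta> \<bullet> (v - xs) \<le> Rr v" if "v \<in> effdom R" for v
    using min[OF that] by (simp add: inner_diff_right)
  then have growth: "Rr xs + \<zeta> \<bullet> (w - xs) + \<sigma> * (norm (w - xs))\<^sup>2 \<le> Rr w" if "w \<in> effdom R" for w
    using strongly_convex_on_subgradient_growth[OF strongly_convex_on_Rr xs that] by blast
  fix x assume "\<forall>w. R x - ereal (\<zeta> \<bullet> x) \<le> R w - ereal (\<zeta> \<bullet> w)"
  then have le: "R x - ereal (\<zeta> \<bullet> x) \<le> ereal (Rr xs - \<zeta> \<bullet> xs)"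
    using R_eq_ereal[OF xs] by (metis ereal_minus(1))
  then have x: "x \<in> effdom R" unfolding effdom_def by (cases "R x") auto
  then have "\<sigma> * (norm (x - xs))\<^sup>2 \<le> 0"
    using le growth[OF x] by (simp add: R_eq_ereal inner_diff_right)
  then show "x = xs" using \<sigma>_pos by (simp add: mult_le_0_iff)
qed

lemma
  shows grad_conj_in_effdom: "grad_conj R \<zeta> \<in> effdom R"
    and grad_conj_growth: "w \<in> effdom R \<Longrightarrow>
      Rr (grad_conj R \<zeta>) - \<zeta> \<bullet> grad_conj R \<zeta> + \<sigma> * (norm (w - grad_conj R \<zeta>))\<^sup>2 \<le> Rr w - \<zeta> \<bullet> w"
proof -
  have sc: "strongly_convex_on (effdom R) (\<lambda>w. Rr w - \<zeta> \<bullet> w) \<sigma>"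
    using strongly_convex_on_Rr bounded_linear_inner_right
    by (rule strongly_convex_on_diff_linear[OF _ bounded_linear.linear])
  have ne: "effdom R \<noteq> {}"
    using subdiff_nonempty unfolding subdiff_def effdom_def by (auto simp: top.not_eq_extremum)
  obtain b where b: "\<And>w. w \<in> effdom R \<Longrightarrow> b \<le> Rr w - \<zeta> \<bullet> w"
    using conj_objective_bounded_below by blast
  have "\<exists>xs\<in>effdom R. \<forall>w\<in>effdom R. Rr xs - \<zeta> \<bullet> xs \<le> Rr w - \<zeta> \<bullet> w"
  proof (rule strongly_convex_on_attains_min[OF sc \<sigma>_pos ne])
    show "\<And>w. w \<in> effdom R \<Longrightarrow> b \<le> Rr w - \<zeta> \<bullet> w" by (rule b)
  qed (rule conj_objective_closed)
  then obtain xs where xs: "xs \<in> effdom R"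
    and min: "\<And>w. w \<in> effdom R \<Longrightarrow> Rr xs - \<zeta> \<bullet> xs \<le> Rr w - \<zeta> \<bullet> w"
    by blast
  have "grad_conj R \<zeta> = xs" by (rule grad_conj_eqI[OF xs min])
  with xs show "grad_conj R \<zeta> \<in> effdom R" by simp
  show "Rr (grad_conj R \<zeta>) - \<zeta> \<bullet> grad_conj R \<zeta> + \<sigma> * (norm (w - grad_conj R \<zeta>))\<^sup>2 \<le> Rr w - \<zeta> \<bullet> w"
    if "w \<in> effdom R"
    using strongly_convex_on_subgradient_growth[OF strongly_convex_on_Rr xs that, of \<zeta>] min
      \<open>grad_conj R \<zeta> = xs\<close> by (simp add: inner_diff_right algebra_simps)
qed

text \<open>Bregman form of the \<open>1/(2\<sigma>)\<close>-Lipschitz continuity of \<open>\<nabla>\<R>\<^sup>*\<close>.\<close>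
lemma grad_conj_bregman_le:
  fixes \<zeta> \<zeta>' :: 'a
  defines "x \<equiv> grad_conj R \<zeta>" and "x' \<equiv> grad_conj R \<zeta>'"
  shows "4 * \<sigma> * (Rr x - Rr x' - \<zeta>' \<bullet> (x - x')) \<le> (norm (\<zeta>' - \<zeta>))\<^sup>2"
proof -
  define e where "e = norm (x' - x)"
  have "Rr x - \<zeta> \<bullet> x + \<sigma> * e\<^sup>2 \<le> Rr x' - \<zeta> \<bullet> x'"
    using grad_conj_growth[OF grad_conj_in_effdom] unfolding x_def x'_def e_def .
  then have "Rr x - Rr x' - \<zeta>' \<bullet> (x - x') \<le> (\<zeta>' - \<zeta>) \<bullet> (x' - x) - \<sigma> * e\<^sup>2"
    by (simp add: inner_diff_left inner_diff_right)
  also have "\<dots> \<le> norm (\<zeta>' - \<zeta>) * e - \<sigma> * e\<^sup>2"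
    using norm_cauchy_schwarz[of "\<zeta>' - \<zeta>" "x' - x"] unfolding e_def by simp
  also have "\<dots> \<le> (norm (\<zeta>' - \<zeta>))\<^sup>2 / (4 * \<sigma>)"
  proof -
    have "0 \<le> (norm (\<zeta>' - \<zeta>) - 2 * \<sigma> * e)\<^sup>2" by simp
    then show ?thesis using \<sigma>_pos by (simp add: field_simps power2_eq_square)
  qed
  finally show ?thesis using \<sigma>_pos by (simp add: field_simps)
qed

end

section \<open>The iteration with exact data\<close>

locale momentum_landweber = strongly_convex_functional R \<sigma>
  for R :: "'a::{real_inner,complete_space} \<Rightarrow> ereal" and \<sigma> :: real +
  fixes F :: "'a \<Rightarrow> 'b::real_inner" and y :: 'b
    and \<rho> \<eta> Lc \<mu>0 \<mu>1 :: real and \<beta> :: ereal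
    and x0 \<xi>0 xbar :: 'a
    and Lop :: "'a \<Rightarrow> ('a \<Rightarrow>\<^sub>L 'b)"
    and adaptive :: bool
    and \<xi> x m :: "nat \<Rightarrow> 'a"
    and r :: "nat \<Rightarrow> 'b" and g :: "nat \<Rightarrow> 'a"
    and \<alpha> \<beta>n \<gamma> :: "nat \<Rightarrow> real"
  assumes \<rho>_pos: "0 < \<rho>"
    and xbar_sol: "F xbar = y"
    and xbar_breg: "bregman R \<xi>0 xbar x0 \<le> ereal (\<sigma> * \<rho>\<^sup>2)"
    and tangential_cone: "\<And>z w. z \<in> cball x0 (2 * \<rho>) \<Longrightarrow> w \<in> cball x0 (2 * \<rho>) \<Longrightarrow>
          norm (F z - F w - Lop w (z - w)) \<le> \<eta> * norm (F z - F w)"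
    and L_bound: "\<And>z. z \<in> cball x0 (2 * \<rho>) \<Longrightarrow> norm (Lop z) \<le> Lc"
    and Lc_pos: "0 < Lc"
    and \<beta>_pos: "0 < \<beta>"
    and \<mu>0_pos: "0 < \<mu>0" and \<mu>0_bound: "\<mu>0 < 4 * \<sigma> * (1 - \<eta>)"
    and \<mu>1_pos: "0 < \<mu>1"
    and init_\<xi>: "\<xi> 0 = \<xi>0"
    and init_x: "x 0 = x0"
    and x_def: "x n = grad_conj R (\<xi> n)"
    and r_def: "r n = F (x n) - y"
    and g_def: "g n = adjoint (blinfun_apply (Lop (x n))) (r n)"
    and \<alpha>_def: "\<alpha> n =
          (if adaptive then
             (if r n = 0 then 0
              else if g n = 0 then \<mu>1
              else min (\<mu>0 * (norm (r n))\<^sup>2 / (norm (g n))\<^sup>2) \<mu>1)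
           else \<mu>0 / Lc\<^sup>2)"
    and m0: "m 0 = 0"
    and mSuc: "m (Suc n) = \<xi> (Suc n) - \<xi> n"
    and \<gamma>0: "\<gamma> 0 = 0"
    and \<gamma>Suc: "\<gamma> (Suc n) = m (Suc n) \<bullet> (x (Suc n) - x n)
                 - (1 - \<eta>) * \<alpha> n * (norm (r n))\<^sup>2 + \<beta>n n * \<gamma> n"
    and \<beta>n_def: "ereal (\<beta>n n) =
          (if m n = 0 then 0
           else min (ereal (max 0 ((\<alpha> n * (g n \<bullet> m n) - 2 * \<sigma> * \<gamma> n) / (norm (m n))\<^sup>2))) \<beta>)"
    and \<xi>Suc: "\<xi> (Suc n) = \<xi> n - \<alpha> n *\<^sub>R g n + \<beta>n n *\<^sub>R m n"
begin

abbreviation B :: "'a set" where "B \<equiv> cball x0 (2 * \<rho>)"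

definition breg :: "nat \<Rightarrow> 'a \<Rightarrow> real" where
  "breg n z = Rr z - Rr (x n) - \<xi> n \<bullet> (z - x n)"

definition descent_rate :: real where
  "descent_rate = 1 - \<eta> - \<mu>0 / (4 * \<sigma>)"

lemma descent_rate_pos: "0 < descent_rate"
  using \<mu>0_bound \<sigma>_pos by (simp add: descent_rate_def field_simps)

lemma x_in_effdom: "x n \<in> effdom R"
  unfolding x_def by (rule grad_conj_in_effdom)

lemma breg_self [simp]: "breg n (x n) = 0"
  unfolding breg_def by simp

lemma breg_ge: "z \<in> effdom R \<Longrightarrow> \<sigma> * (norm (z - x n))\<^sup>2 \<le> breg n z"
  using grad_conj_growth[of z "\<xi> n"] unfolding breg_def x_def[symmetric] by (simp add: inner_diff_right)

lemma R_x0: "R x0 = ereal (Rr x0)"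
  using x_in_effdom[of 0] unfolding init_x by (rule R_eq_ereal)

lemma xbar_in_effdom: "xbar \<in> effdom R"
proof (rule ccontr)
  assume "xbar \<notin> effdom R"
  then have "bregman R \<xi>0 xbar x0 = \<infinity>"
    unfolding bregman_def R_eq_infinity[OF \<open>xbar \<notin> effdom R\<close>] R_x0 by simp
  then show False using xbar_breg by simp
qed

lemma breg_xbar_init: "breg 0 xbar \<le> \<sigma> * \<rho>\<^sup>2"
  using xbar_breg unfolding bregman_def breg_def R_x0 R_eq_ereal[OF xbar_in_effdom] init_x init_\<xi>
  by simp

lemma norm_xbar_diff_le:
  assumes "breg n xbar \<le> \<sigma> * \<rho>\<^sup>2"
  shows "norm (xbar - x n) \<le> \<rho>"
proof -
  have "\<sigma> * (norm (xbar - x n))\<^sup>2 \<le> \<sigma> * \<rho>\<^sup>2"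
    using breg_ge[OF xbar_in_effdom] assms by (rule order_trans)
  then have "(norm (xbar - x n))\<^sup>2 \<le> \<rho>\<^sup>2" using \<sigma>_pos by simp
  then show ?thesis by (rule power2_le_imp_le) (use \<rho>_pos in simp)
qed

lemma xbar_in_B: "xbar \<in> B"
  using norm_xbar_diff_le[OF breg_xbar_init] \<rho>_pos norm_minus_commute[of x0 xbar]
  by (simp add: init_x dist_norm)

lemma x_in_B_if_breg_xbar_le:
  assumes "breg n xbar \<le> \<sigma> * \<rho>\<^sup>2"
  shows "x n \<in> B"
proof -
  have "norm (x0 - x n) \<le> norm (x0 - xbar) + norm (xbar - x n)"
    using norm_triangle_ineq[of "x0 - xbar" "xbar - x n"] by simp
  then show ?thesis
    using norm_xbar_diff_le[OF breg_xbar_init] norm_xbar_diff_le[OF assms] norm_minus_commute[of x0 xbar]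
    by (simp add: init_x dist_norm)
qed

lemma inner_g: "Lop (x n) v \<bullet> r n = v \<bullet> g n"
  unfolding g_def by (rule adjoint_works_complete[OF blinfun.bounded_linear_right])

lemma g_eq_0_if_r_eq_0: "r n = 0 \<Longrightarrow> g n = 0"
  using inner_g[of n "g n"] by simp

lemma norm_g_le:
  assumes "x n \<in> B"
  shows "norm (g n) \<le> Lc * norm (r n)"
proof -
  have "(norm (g n))\<^sup>2 = Lop (x n) (g n) \<bullet> r n" by (simp add: inner_g power2_norm_eq_inner)
  also have "\<dots> \<le> norm (Lop (x n)) * norm (g n) * norm (r n)"
    using norm_cauchy_schwarz[of "Lop (x n) (g n)" "r n"] norm_blinfun[of "Lop (x n)" "g n"]
    by (meson mult_right_mono norm_ge_zero order_trans)
  also have "\<dots> \<le> Lc * norm (g n) * norm (r n)"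
    using L_bound[OF assms] by (simp add: mult_right_mono)
  finally have "norm (g n) * norm (g n) \<le> norm (g n) * (Lc * norm (r n))"
    by (simp add: power2_eq_square algebra_simps)
  then show ?thesis
    using Lc_pos by (cases "g n = 0") (simp_all add: mult_le_cancel_left_pos)
qed

lemma \<alpha>_nonneg: "0 \<le> \<alpha> n"
  unfolding \<alpha>_def using \<mu>0_pos \<mu>1_pos by auto

lemma \<alpha>_pos: "r n \<noteq> 0 \<Longrightarrow> 0 < \<alpha> n"
  unfolding \<alpha>_def using \<mu>0_pos \<mu>1_pos Lc_pos by auto

lemma descent_term_nonneg: "0 \<le> descent_rate * \<alpha> n * (norm (r n))\<^sup>2"
  using descent_rate_pos \<alpha>_nonneg by simp

lemma \<alpha>_norm_g_le:
  assumes "x n \<in> B"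
  shows "\<alpha> n * (norm (g n))\<^sup>2 \<le> \<mu>0 * (norm (r n))\<^sup>2"
proof (cases adaptive)
  case True
  show ?thesis
  proof (cases "r n = 0 \<or> g n = 0")
    case False
    then have "\<alpha> n \<le> \<mu>0 * (norm (r n))\<^sup>2 / (norm (g n))\<^sup>2" using True unfolding \<alpha>_def by simp
    then show ?thesis using False by (simp add: pos_le_divide_eq)
  qed (use True \<mu>0_pos in \<open>auto simp: \<alpha>_def\<close>)
next
  case False
  have "(norm (g n))\<^sup>2 \<le> (Lc * norm (r n))\<^sup>2"
    using norm_g_le[OF assms] by (simp add: power_mono)
  then have "\<mu>0 / Lc\<^sup>2 * (norm (g n))\<^sup>2 \<le> \<mu>0 / Lc\<^sup>2 * (Lc * norm (r n))\<^sup>2"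
    by (rule mult_left_mono) (use \<mu>0_pos in simp)
  also have "\<dots> = \<mu>0 * (norm (r n))\<^sup>2" using Lc_pos by (simp add: power_mult_distrib)
  finally show ?thesis using False by (simp add: \<alpha>_def)
qed

lemma \<beta>n_nonneg: "0 \<le> \<beta>n n"
proof -
  have "ereal 0 \<le> ereal (\<beta>n n)" unfolding \<beta>n_def using \<beta>_pos by (auto simp flip: zero_ereal_def)
  then show ?thesis by simp
qed

lemma \<beta>n_eq_0: "m n = 0 \<Longrightarrow> \<beta>n n = 0"
  using \<beta>n_def[of n] by (simp add: zero_ereal_def)

text \<open>It holds because \<open>\<beta>\<^sub>n\<close> is clipped to
  \<open>[0, (\<alpha>\<^sub>n\<langle>g\<^sub>n,m\<^sub>n\<rangle> - 2\<sigma>\<gamma>\<^sub>n)/\<parallel>m\<^sub>n\<parallel>\<^sup>2]\<close>, i.e. between the smaller root and the vertex of this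
  quadratic in \<open>\<beta>\<^sub>n\<close>.\<close>
lemma \<beta>n_quadratic_nonpos:
  "(\<beta>n n)\<^sup>2 * (norm (m n))\<^sup>2 - 2 * \<alpha> n * \<beta>n n * (g n \<bullet> m n) + 4 * \<sigma> * \<beta>n n * \<gamma> n \<le> 0"
proof (cases "m n = 0 \<or> \<beta>n n = 0")
  case False
  then have mn: "m n \<noteq> 0" and pos: "0 < \<beta>n n" using \<beta>n_nonneg[of n] by auto
  have "ereal (\<beta>n n) \<le> ereal (max 0 ((\<alpha> n * (g n \<bullet> m n) - 2 * \<sigma> * \<gamma> n) / (norm (m n))\<^sup>2))"
    unfolding \<beta>n_def using mn by simp
  then have "\<beta>n n \<le> (\<alpha> n * (g n \<bullet> m n) - 2 * \<sigma> * \<gamma> n) / (norm (m n))\<^sup>2"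
    using pos by (simp add: max_def split: if_splits)
  then have "\<beta>n n * (norm (m n))\<^sup>2 \<le> \<alpha> n * (g n \<bullet> m n) - 2 * \<sigma> * \<gamma> n"
    using mn by (simp add: pos_le_divide_eq)
  moreover have "0 \<le> \<beta>n n * (norm (m n))\<^sup>2" using pos by simp
  ultimately have "\<beta>n n * (norm (m n))\<^sup>2 - 2 * (\<alpha> n * (g n \<bullet> m n)) + 4 * (\<sigma> * \<gamma> n) \<le> 0"
    by linarith
  then have "\<beta>n n * (\<beta>n n * (norm (m n))\<^sup>2 - 2 * (\<alpha> n * (g n \<bullet> m n)) + 4 * (\<sigma> * \<gamma> n)) \<le> 0"
    using pos by (simp add: mult_nonneg_nonpos)
  then show ?thesis by (simp add: power2_eq_square algebra_simps)
qed (use \<beta>n_eq_0 in auto)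

lemma residual_le_inner_g:
  assumes "x n \<in> B" and "z \<in> B" and "F z = y"
  shows "(1 - \<eta>) * (norm (r n))\<^sup>2 \<le> g n \<bullet> (x n - z)"
proof -
  define v where "v = Lop (x n) (x n - z)"
  have "norm (v - r n) \<le> \<eta> * norm (r n)"
  proof -
    have "v - r n = F z - F (x n) - Lop (x n) (z - x n)"
      unfolding v_def r_def \<open>F z = y\<close> by (simp add: blinfun.diff_right algebra_simps)
    moreover have "norm (F z - F (x n)) = norm (r n)"
      unfolding r_def \<open>F z = y\<close> by (rule norm_minus_commute)
    ultimately show ?thesis using tangential_cone[OF assms(2,1)] by simp
  qed
  have "(1 - \<eta>) * (norm (r n))\<^sup>2 \<le> (norm (r n))\<^sup>2 - norm (v - r n) * norm (r n)"
    using mult_right_mono[OF \<open>norm (v - r n) \<le> \<eta> * norm (r n)\<close> norm_ge_zero]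
    by (simp add: power2_eq_square algebra_simps)
  also have "\<dots> \<le> (norm (r n))\<^sup>2 + (v - r n) \<bullet> r n"
    using norm_cauchy_schwarz[of "r n - v" "r n"] by (simp add: inner_diff_left norm_minus_commute)
  also have "\<dots> = v \<bullet> r n" by (simp add: inner_diff_left power2_norm_eq_inner)
  also have "\<dots> = g n \<bullet> (x n - z)" unfolding v_def inner_g by (rule inner_commute)
  finally show ?thesis .
qed

lemma \<xi>_diff: "\<xi> (Suc n) - \<xi> n = \<beta>n n *\<^sub>R m n - \<alpha> n *\<^sub>R g n"
  using \<xi>Suc[of n] by (simp add: algebra_simps)

lemma \<xi>_diff_inner_le:
  assumes "x n \<in> B" and "z \<in> B" and "F z = y" and "m n \<bullet> (x n - z) \<le> \<gamma> n"
  shows "(\<xi> (Suc n) - \<xi> n) \<bullet> (x n - z) \<le> \<beta>n n * \<gamma> n - (1 - \<eta>) * \<alpha> n * (norm (r n))\<^sup>2"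
proof -
  have "\<alpha> n * ((1 - \<eta>) * (norm (r n))\<^sup>2) \<le> \<alpha> n * (g n \<bullet> (x n - z))"
    using residual_le_inner_g[OF assms(1-3)] \<alpha>_nonneg by (rule mult_left_mono)
  moreover have "\<beta>n n * (m n \<bullet> (x n - z)) \<le> \<beta>n n * \<gamma> n"
    using assms(4) \<beta>n_nonneg by (rule mult_left_mono)
  ultimately show ?thesis by (simp add: \<xi>_diff inner_diff_left algebra_simps)
qed

text \<open>\<open>\<gamma>\<^sub>n\<close> is a computable upper bound for the unknown \<open>\<langle>m\<^sub>n, x\<^sub>n - z\<rangle>\<close>, valid for every
  solution \<open>z\<close> in the ball.\<close>
lemma m_inner_le_\<gamma>:
  assumes "z \<in> B" and "F z = y" and "\<forall>k<n. x k \<in> B"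
  shows "m n \<bullet> (x n - z) \<le> \<gamma> n"
  using assms(3)
proof (induction n)
  case 0
  then show ?case by (simp add: m0 \<gamma>0)
next
  case (Suc n)
  then have "x n \<in> B" and "m n \<bullet> (x n - z) \<le> \<gamma> n" by auto
  then have "(\<xi> (Suc n) - \<xi> n) \<bullet> (x n - z) \<le> \<beta>n n * \<gamma> n - (1 - \<eta>) * \<alpha> n * (norm (r n))\<^sup>2"
    using \<xi>_diff_inner_le assms(1,2) by blast
  moreover have "m (Suc n) \<bullet> (x (Suc n) - z)
      = m (Suc n) \<bullet> (x (Suc n) - x n) + (\<xi> (Suc n) - \<xi> n) \<bullet> (x n - z)"
    by (simp add: mSuc inner_diff_right)
  ultimately show ?case using \<gamma>Suc[of n] by linarith
qed

lemma norm_\<xi>_diff_sq_le: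
  assumes "x n \<in> B"
  shows "(norm (\<xi> (Suc n) - \<xi> n))\<^sup>2 \<le> \<alpha> n * \<mu>0 * (norm (r n))\<^sup>2 - 4 * \<sigma> * \<beta>n n * \<gamma> n"
proof -
  have "(norm (\<xi> (Suc n) - \<xi> n))\<^sup>2
      = (\<beta>n n)\<^sup>2 * (norm (m n))\<^sup>2 - 2 * \<alpha> n * \<beta>n n * (g n \<bullet> m n) + (\<alpha> n)\<^sup>2 * (norm (g n))\<^sup>2"
    unfolding \<xi>_diff power2_norm_eq_inner
    by (simp add: inner_diff_left inner_diff_right inner_commute[of "m n" "g n"]
        power2_eq_square algebra_simps)
  moreover have "(\<alpha> n)\<^sup>2 * (norm (g n))\<^sup>2 \<le> \<alpha> n * \<mu>0 * (norm (r n))\<^sup>2"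
    using mult_left_mono[OF \<alpha>_norm_g_le[OF assms] \<alpha>_nonneg] by (simp add: power2_eq_square algebra_simps)
  ultimately show ?thesis using \<beta>n_quadratic_nonpos[of n] by linarith
qed

lemma breg_three_point:
  "breg (Suc n) z = breg n z + breg (Suc n) (x n) + (\<xi> (Suc n) - \<xi> n) \<bullet> (x n - z)"
  unfolding breg_def by (simp add: inner_diff_left inner_diff_right algebra_simps)

lemma breg_descent:
  assumes z: "z \<in> B" "F z = y" and x: "\<forall>k\<le>n. x k \<in> B"
  shows "breg (Suc n) z \<le> breg n z - descent_rate * \<alpha> n * (norm (r n))\<^sup>2"
proof -
  have "4 * \<sigma> * breg (Suc n) (x n) \<le> (norm (\<xi> (Suc n) - \<xi> n))\<^sup>2"
    using grad_conj_bregman_le[of "\<xi> n" "\<xi> (Suc n)"] unfolding breg_def x_def[symmetric] by simp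
  also have "\<dots> \<le> \<alpha> n * \<mu>0 * (norm (r n))\<^sup>2 - 4 * \<sigma> * \<beta>n n * \<gamma> n"
    using x by (simp add: norm_\<xi>_diff_sq_le)
  finally have "4 * \<sigma> * breg (Suc n) (x n) \<le> \<alpha> n * \<mu>0 * (norm (r n))\<^sup>2 - 4 * \<sigma> * \<beta>n n * \<gamma> n" .
  moreover have "(\<xi> (Suc n) - \<xi> n) \<bullet> (x n - z) \<le> \<beta>n n * \<gamma> n - (1 - \<eta>) * \<alpha> n * (norm (r n))\<^sup>2"
    using \<xi>_diff_inner_le m_inner_le_\<gamma> z x by simp
  then have "4 * \<sigma> * ((\<xi> (Suc n) - \<xi> n) \<bullet> (x n - z))
      \<le> 4 * \<sigma> * (\<beta>n n * \<gamma> n - (1 - \<eta>) * \<alpha> n * (norm (r n))\<^sup>2)"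
    using \<sigma>_pos by simp
  ultimately have "4 * \<sigma> * breg (Suc n) (x n) + 4 * \<sigma> * ((\<xi> (Suc n) - \<xi> n) \<bullet> (x n - z))
      \<le> (\<alpha> n * \<mu>0 * (norm (r n))\<^sup>2 - 4 * \<sigma> * \<beta>n n * \<gamma> n)
        + 4 * \<sigma> * (\<beta>n n * \<gamma> n - (1 - \<eta>) * \<alpha> n * (norm (r n))\<^sup>2)"
    by (rule add_mono)
  also have "\<dots> = 4 * \<sigma> * (- descent_rate * \<alpha> n * (norm (r n))\<^sup>2)"
    using \<sigma>_pos by (simp add: descent_rate_def field_simps)
  finally have "4 * \<sigma> * (breg (Suc n) z - breg n z) \<le> 4 * \<sigma> * (- descent_rate * \<alpha> n * (norm (r n))\<^sup>2)"
    by (simp add: breg_three_point[of n z] algebra_simps)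
  then have "breg (Suc n) z - breg n z \<le> - descent_rate * \<alpha> n * (norm (r n))\<^sup>2"
    by (rule mult_left_le_imp_le) (use \<sigma>_pos in simp)
  then show ?thesis by simp
qed

lemma breg_xbar_le: "breg n xbar \<le> \<sigma> * \<rho>\<^sup>2"
proof (induction n rule: less_induct)
  case (less n)
  show ?case
  proof (cases n)
    case (Suc p)
    then have "\<forall>k\<le>p. x k \<in> B" using less x_in_B_if_breg_xbar_le by auto
    then have "breg (Suc p) xbar \<le> breg p xbar - descent_rate * \<alpha> p * (norm (r p))\<^sup>2"
      by (rule breg_descent[OF xbar_in_B xbar_sol])
    then show ?thesis using less[of p] Suc descent_term_nonneg[of p] by simp
  qed (use breg_xbar_init in simp)
qed

lemma x_in_B: "x n \<in> B"
  by (rule x_in_B_if_breg_xbar_le[OF breg_xbar_le])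

lemma breg_antimono:
  assumes "z \<in> B" and "F z = y" and "n \<le> k"
  shows "breg k z \<le> breg n z"
proof (rule lift_Suc_antimono_le[of "\<lambda>k. breg k z", OF _ assms(3)])
  fix p
  have "breg (Suc p) z \<le> breg p z - descent_rate * \<alpha> p * (norm (r p))\<^sup>2"
    using breg_descent[OF assms(1,2)] x_in_B by blast
  then show "breg (Suc p) z \<le> breg p z" using descent_term_nonneg[of p] by simp
qed

lemma x_eq_if_solution:
  assumes "F (x n) = y" and "n \<le> k"
  shows "x k = x n"
proof -
  have "\<sigma> * (norm (x n - x k))\<^sup>2 \<le> 0"
    using breg_ge[OF x_in_effdom] breg_antimono[OF x_in_B assms] by (metis breg_self order_trans)
  then show ?thesis using \<sigma>_pos by (simp add: mult_le_0_iff)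
qed

lemma r_eq_0_if_stationary:
  assumes "\<xi> (Suc n) = \<xi> n"
  shows "r n = 0"
proof (rule ccontr)
  assume "r n \<noteq> 0"
  then have "0 < descent_rate * \<alpha> n * (norm (r n))\<^sup>2"
    using descent_rate_pos \<alpha>_pos by simp
  moreover have "breg (Suc n) xbar = breg n xbar"
    using assms x_def[of n] x_def[of "Suc n"] by (simp add: breg_def)
  moreover have "breg (Suc n) xbar \<le> breg n xbar - descent_rate * \<alpha> n * (norm (r n))\<^sup>2"
    using breg_descent[OF xbar_in_B xbar_sol] x_in_B by blast
  ultimately show False by simp
qed

lemma stationary_Suc:
  assumes "\<xi> (Suc n) = \<xi> n"
  shows "\<xi> (Suc (Suc n)) = \<xi> (Suc n)"
proof -
  have "x (Suc n) = x n" using assms x_def[of n] x_def[of "Suc n"] by simp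
  then have "g (Suc n) = 0"
    using r_eq_0_if_stationary[OF assms] r_def[of n] r_def[of "Suc n"] g_eq_0_if_r_eq_0 by simp
  moreover have "m (Suc n) = 0" using assms by (simp add: mSuc)
  ultimately show ?thesis using \<xi>Suc[of "Suc n"] by simp
qed

lemma \<xi>_eq_if_stationary:
  assumes "\<xi> (Suc n) = \<xi> n" and "n \<le> k"
  shows "\<xi> k = \<xi> n"
proof -
  have step: "\<xi> (Suc k) = \<xi> k" if "n \<le> k" for k
    using that
  proof (induction k rule: dec_induct)
    case base
    show ?case by (rule assms(1))
  next
    case (step k)
    then show ?case using stationary_Suc by blast
  qed
  show ?thesis using assms(2) by (induction k rule: dec_induct) (simp_all add: step)
qed

end

theorem mainTheorem6:
  fixes R :: "'a::{real_inner, complete_space} \<Rightarrow> ereal"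
    and F :: "'a \<Rightarrow> 'b::{real_inner, complete_space}"
    and domF :: "'a set" and y :: 'b
    and \<sigma> \<rho> \<eta> Lc \<mu>0 \<mu>1 :: real and \<beta> :: ereal
    and x0 \<xi>0 xbar :: 'a
    and Lop :: "'a \<Rightarrow> ('a \<Rightarrow>\<^sub>L 'b)"
    and adaptive :: bool
    and \<xi> x m :: "nat \<Rightarrow> 'a"
    and r :: "nat \<Rightarrow> 'b" and g :: "nat \<Rightarrow> 'a"
    and \<alpha> \<beta>n \<gamma> :: "nat \<Rightarrow> real"
  assumes R_proper: "proper_fun R"
    and R_lsc: "lsc_fun R"
    and \<sigma>_pos: "\<sigma> > 0"
    and R_sc: "strongly_convex R \<sigma>"
    \<comment> \<open>(b)\<close>
    and \<rho>_pos: "\<rho> > 0"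
    and \<xi>0_sub: "\<xi>0 \<in> subdiff R x0"
    and ball_dom: "cball x0 (2 * \<rho>) \<subseteq> domF"
    and xbar_dom: "xbar \<in> domF" and xbar_sol: "F xbar = y"
    and xbar_breg: "bregman R \<xi>0 xbar x0 \<le> ereal (\<sigma> * \<rho>\<^sup>2)"
    \<comment> \<open>(c)\<close>
    and weakly_closed: "\<And>u z v. (\<forall>n. u n \<in> domF) \<Longrightarrow> weak_conv u z \<Longrightarrow>
                          (\<lambda>n. F (u n)) \<longlonglongrightarrow> v \<Longrightarrow> z \<in> domF \<and> F z = v"
    \<comment> \<open>(d)\<close>
    and L_cont: "continuous_on (cball x0 (2 * \<rho>)) Lop"
    and \<eta>_range: "0 \<le> \<eta>" "\<eta> < 1"
    and tangential_cone: "\<And>z w. z \<in> cball x0 (2 * \<rho>) \<Longrightarrow> w \<in> cball x0 (2 * \<rho>) \<Longrightarrow>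
          norm (F z - F w - Lop w (z - w)) \<le> \<eta> * norm (F z - F w)"
    and Lc_pos: "Lc > 0"
    and L_bound: "\<And>z. z \<in> cball x0 (2 * \<rho>) \<Longrightarrow> norm (Lop z) \<le> Lc"
    \<comment> \<open>parameters\<close>
    and \<beta>_pos: "\<beta> > 0"
    and \<mu>0_pos: "0 < \<mu>0" and \<mu>0_bound: "\<mu>0 < 4 * \<sigma> * (1 - \<eta>)"
    and \<mu>1_pos: "\<mu>1 > 0"
    \<comment> \<open>Algorithm 2 with exact data\<close>
    and init_\<xi>: "\<xi> 0 = \<xi>0"
    and init_x: "x 0 = x0"
    and x_def: "\<And>n. x n = grad_conj R (\<xi> n)"
    and r_def: "\<And>n. r n = F (x n) - y"
    and g_def: "\<And>n. g n = adjoint (blinfun_apply (Lop (x n))) (r n)"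
    and \<alpha>_def: "\<And>n. \<alpha> n =
          (if adaptive then
             (if r n = 0 then 0
              else if g n = 0 then \<mu>1
              else min (\<mu>0 * (norm (r n))\<^sup>2 / (norm (g n))\<^sup>2) \<mu>1)
           else \<mu>0 / Lc\<^sup>2)"
    and m0: "m 0 = 0"
    and mSuc: "\<And>n. m (Suc n) = \<xi> (Suc n) - \<xi> n"
    and \<gamma>0: "\<gamma> 0 = 0"
    and \<gamma>Suc: "\<And>n. \<gamma> (Suc n) = m (Suc n) \<bullet> (x (Suc n) - x n)
                 - (1 - \<eta>) * \<alpha> n * (norm (r n))\<^sup>2 + \<beta>n n * \<gamma> n"
    and \<beta>n_def: "\<And>n. ereal (\<beta>n n) =
          (if m n = 0 then 0
           else min (ereal (max 0 ((\<alpha> n * (g n \<bullet> m n) - 2 * \<sigma> * \<gamma> n) / (norm (m n))\<^sup>2))) \<beta>)"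
    and \<xi>Suc: "\<And>n. \<xi> (Suc n) = \<xi> n - \<alpha> n *\<^sub>R g n + \<beta>n n *\<^sub>R m n"
  shows "(\<forall>n. F (x n) = y \<longrightarrow> (\<forall>k>n. x k = x n))
       \<and> (\<forall>n. \<xi> (Suc n) = \<xi> n \<longrightarrow>
              F (x n) = y \<and> (\<forall>k>n. x k = x n \<and> \<xi> k = \<xi> n))"
proof -
  interpret momentum_landweber R \<sigma> F y \<rho> \<eta> Lc \<mu>0 \<mu>1 \<beta> x0 \<xi>0 xbar Lop adaptive \<xi> x m r g \<alpha> \<beta>n \<gamma>
    by (unfold_locales; (fact assms)?) (use \<xi>0_sub in blast)
  have part_i: "\<forall>k>n. x k = x n" if "F (x n) = y" for n
    using x_eq_if_solution[OF that] by (meson less_imp_le)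
  have part_ii: "F (x n) = y \<and> (\<forall>k>n. x k = x n \<and> \<xi> k = \<xi> n)" if "\<xi> (Suc n) = \<xi> n" for n
  proof (intro conjI allI impI)
    show "F (x n) = y" using r_eq_0_if_stationary[OF that] by (simp add: r_def)
    fix k assume "n < k"
    then show "\<xi> k = \<xi> n" by (intro \<xi>_eq_if_stationary[OF that]) simp
    then show "x k = x n" by (simp add: x_def)
  qed
  from part_i part_ii show ?thesis by blast
qed

end
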